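(* Let $C$ be a strictly convex cone in a topological real vector space $V$ such that the interior of $C$ in $V$ is non-empty and $C\neq V$. Then $V$ is one-dimensional and $C\cup\{0\}$ is a ray, i.e. $C\cup\{0\}=\{tx: t\ge 0\}$ for some non-zero $x\in V$.
   Context: Topological real vector spaces are not assumed Hausdorff. A cone is a subset $C$ with $\lambda C\subseteq C$ for all $\lambda>0$ (it may or may not contain $0$). For a subset $S$, $\mathrm{Aff}(S)$ is its affine hull; $\mathrm{ri}(S)$, $\mathrm{rc}(S)$ are the interior and closure of $S$ in the subspace topology of $\mathrm{Aff}(S)$. $]x,y[=\{(1-t)x+ty: t\in[0,1]\}\setminus\{x,y\}$. A set $C$ is strictly convex if for any two distinct $x,y\in\mathrm{rc}(C)$, $]x,y[\subseteq\mathrm{ri}(C)$. *)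

theory Defs
  imports "HOL-Analysis.Analysis"
begin

definition topological_real_vector_space :: "'a::{real_vector,topological_space} itself \<Rightarrow> bool" where
  "topological_real_vector_space _ \<longleftrightarrow>
     continuous_on UNIV (\<lambda>p::'a \<times> 'a. fst p + snd p) \<and>
     continuous_on UNIV (\<lambda>p::real \<times> 'a. fst p *\<^sub>R snd p)"

text \<open>A cone: closed under multiplication by positive scalars (need not contain 0).\<close>
definition pos_cone :: "'a::real_vector set \<Rightarrow> bool" where
  "pos_cone C \<longleftrightarrow> (\<forall>x\<in>C. \<forall>l::real. l > 0 \<longrightarrow> l *\<^sub>R x \<in> C)"

definition rel_closure :: "'a::{real_vector,topological_space} set \<Rightarrow> 'a set" where
  "rel_closure S = (top_of_set (affine hull S)) closure_of S"

definition strictly_convex_set :: "'a::{real_vector,topological_space} set \<Rightarrow> bool" where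
  "strictly_convex_set C \<longleftrightarrow>
     (\<forall>x\<in>rel_closure C. \<forall>y\<in>rel_closure C. x \<noteq> y \<longrightarrow> open_segment x y \<subseteq> rel_interior C)"

end

theory Submission
  imports Defs
begin

text \<open>Since C has nonempty interior, its affine hull is the whole space, so strict convexity is
  a statement about ordinary closure and interior. Every nonzero closure point y lies strictly
  between y/2 and 2y, so it is interior; 0 is not interior because a cone absorbing a
  neighbourhood of 0 is everything, and hence for interior x the point -x is not even in the
  closure (else 0 would be interior as the midpoint). A segment from an interior point that
  avoids 0 cannot leave C: by connectedness it would meet the frontier, at a nonzero closure
  point that is not interior. If some y were off the line through an interior point x, the
  segments x--y and y--(-x) would avoid 0, making first y and then -x interior.\<close>

lemma in_span_if_zero_in_closed_segment:
  fixes x y :: "'a::real_vector"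
  assumes "0 \<in> closed_segment x y" "x \<noteq> 0"
  shows "y \<in> span {x}"
proof -
  obtain u where u: "u \<le> 1" "(1 - u) *\<^sub>R x + u *\<^sub>R y = 0"
    using assms(1) unfolding closed_segment_def by auto
  have "u \<noteq> 0" using u assms(2) by auto
  have "y = (1/u) *\<^sub>R (u *\<^sub>R y)" using \<open>u \<noteq> 0\<close> by simp
  also have "\<dots> = (- ((1 - u) / u)) *\<^sub>R x"
    using u(2) by (simp add: eq_neg_iff_add_eq_0[symmetric] add.commute)
  finally show ?thesis by (metis span_scale span_base singletonI)
qed

lemma cone_Un_zero_eq_ray:
  fixes C :: "'a::real_vector set"
  assumes "pos_cone C" "x \<in> C" "- x \<notin> C" "span {x} = UNIV"
  shows "C \<union> {0} = {t *\<^sub>R x | t. t \<ge> 0}"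
proof (intro equalityI subsetI)
  fix c assume c: "c \<in> C \<union> {0}"
  have "c \<in> span {x}" using assms(4) by simp
  then obtain s where s: "c = s *\<^sub>R x" by (auto simp: span_singleton)
  have "\<not> s < 0"
  proof
    assume "s < 0"
    then have "c \<in> C" using c s assms(2,3) by auto
    moreover have "- 1 / s > 0" using \<open>s < 0\<close> by (simp add: field_simps)
    ultimately have "(- 1 / s) *\<^sub>R c \<in> C" using assms(1) unfolding pos_cone_def by blast
    then show False using s \<open>s < 0\<close> assms(3) by simp
  qed
  then show "c \<in> {t *\<^sub>R x | t. t \<ge> 0}" using s by auto
next
  fix c assume "c \<in> {t *\<^sub>R x | t. t \<ge> 0}"
  then obtain t where "t \<ge> 0" "c = t *\<^sub>R x" by auto
  then show "c \<in> C \<union> {0}"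
    using assms(1,2) unfolding pos_cone_def by (cases "t = 0") auto
qed

context
  assumes tvs: "topological_real_vector_space TYPE('a::{real_vector,topological_space})"
begin

lemma continuous_on_add_trvs:
  assumes "continuous_on S f" "continuous_on S g"
  shows "continuous_on S (\<lambda>t. f t + g t :: 'a)"
proof -
  have "continuous_on S ((\<lambda>p::'a \<times> 'a. fst p + snd p) \<circ> (\<lambda>t. (f t, g t)))"
    using tvs unfolding topological_real_vector_space_def
    by (intro continuous_on_compose continuous_on_Pair assms) (auto intro: continuous_on_subset)
  then show ?thesis by (simp add: o_def)
qed

lemma continuous_on_scaleR_trvs:
  assumes "continuous_on S f" "continuous_on S g"
  shows "continuous_on S (\<lambda>t. f t *\<^sub>R g t :: 'a)"
proof -
  have "continuous_on S ((\<lambda>p::real \<times> 'a. fst p *\<^sub>R snd p) \<circ> (\<lambda>t. (f t, g t)))"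
    using tvs unfolding topological_real_vector_space_def
    by (intro continuous_on_compose continuous_on_Pair assms) (auto intro: continuous_on_subset)
  then show ?thesis by (simp add: o_def)
qed

lemma continuous_on_line_trvs: "continuous_on S (\<lambda>t::real. a + t *\<^sub>R v :: 'a)"
  by (intro continuous_on_add_trvs continuous_on_scaleR_trvs continuous_on_const continuous_on_id)

lemma open_contains_positive_step:
  fixes x v :: 'a
  assumes "open U" "x \<in> U"
  shows "\<exists>e>0. x + e *\<^sub>R v \<in> U"
proof -
  have "open ((\<lambda>t::real. x + t *\<^sub>R v) -` U)"
    using continuous_on_open_vimage[OF open_UNIV] continuous_on_line_trvs assms(1) by auto
  moreover have "0 \<in> (\<lambda>t::real. x + t *\<^sub>R v) -` U" using assms(2) by simp
  ultimately obtain e where "e > 0" "ball 0 e \<subseteq> (\<lambda>t::real. x + t *\<^sub>R v) -` U"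
    using open_contains_ball by blast
  moreover have "e/2 \<in> ball 0 e" using \<open>e > 0\<close> by (simp add: dist_real_def)
  ultimately have "x + (e/2) *\<^sub>R v \<in> U" by blast
  then show ?thesis using \<open>e > 0\<close> by (intro exI[of _ "e/2"]) auto
qed

lemma affine_hull_eq_UNIV_if_interior_nonempty:
  fixes S :: "'a set"
  assumes "interior S \<noteq> {}"
  shows "affine hull S = UNIV"
proof -
  obtain x where x: "x \<in> interior S" using assms by auto
  have "z \<in> affine hull S" for z
  proof -
    obtain e where e: "e > 0" "x + e *\<^sub>R (z - x) \<in> interior S"
      using open_contains_positive_step[OF open_interior x] by blast
    have "(1 - 1/e) *\<^sub>R x + (1/e) *\<^sub>R (x + e *\<^sub>R (z - x)) \<in> affine hull S"
      using x e(2) interior_subset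
      by (intro mem_affine[OF affine_affine_hull]) (auto intro: hull_inc)
    moreover have "(1 - 1/e) *\<^sub>R x + (1/e) *\<^sub>R (x + e *\<^sub>R (z - x)) = z"
      using e(1) by (simp add: scaleR_right_distrib scaleR_diff_left)
    ultimately show ?thesis by simp
  qed
  then show ?thesis by auto
qed

lemma connected_closed_segment_trvs: "connected (closed_segment a (b :: 'a))"
proof -
  have "closed_segment a b = (\<lambda>u. a + u *\<^sub>R (b - a)) ` {0..1}"
    unfolding closed_segment_def by (force simp: algebra_simps)
  then show ?thesis
    using connected_continuous_image[OF continuous_on_line_trvs connected_Icc] by simp
qed

end

locale strictly_convex_solid_cone =
  fixes C :: "'a::{real_vector,topological_space} set"
  assumes tvs: "topological_real_vector_space TYPE('a)"
    and cone: "pos_cone C"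
    and strictly_convex: "strictly_convex_set C"
    and interior_nonempty: "interior C \<noteq> {}"
    and proper: "C \<noteq> UNIV"
begin

lemma open_segment_subset_interior:
  assumes "x \<in> closure C" "y \<in> closure C" "x \<noteq> y"
  shows "open_segment x y \<subseteq> interior C"
proof -
  have aff: "affine hull C = UNIV"
    by (rule affine_hull_eq_UNIV_if_interior_nonempty[OF tvs interior_nonempty])
  have "rel_interior C = interior C" "rel_closure C = closure C"
    unfolding rel_interior interior_def rel_closure_def aff by auto
  then show ?thesis
    using strictly_convex assms unfolding strictly_convex_set_def by metis
qed

lemma scaleR_mem_closure:
  assumes "y \<in> closure C" "l > 0"
  shows "l *\<^sub>R y \<in> closure C"
proof -
  have "(\<lambda>y. l *\<^sub>R y) ` closure C \<subseteq> closure C"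
  proof (rule image_closure_subset)
    show "continuous_on (closure C) (\<lambda>y. l *\<^sub>R y)"
      by (intro continuous_on_scaleR_trvs[OF tvs] continuous_on_const continuous_on_id)
    show "(\<lambda>y. l *\<^sub>R y) ` C \<subseteq> closure C"
      using cone assms(2) closure_subset unfolding pos_cone_def by blast
  qed auto
  then show ?thesis using assms(1) by auto
qed

lemma nonzero_closure_point_in_interior:
  assumes "y \<in> closure C" "y \<noteq> 0"
  shows "y \<in> interior C"
proof -
  have distinct: "(1/2) *\<^sub>R y \<noteq> 2 *\<^sub>R y"
  proof
    assume "(1/2) *\<^sub>R y = 2 *\<^sub>R y"
    then have "((1/2) - 2) *\<^sub>R y = 0" by (simp add: scaleR_diff_left)
    then show False using assms(2) by simp
  qed
  moreover have "y = (1 - 1/3) *\<^sub>R ((1/2) *\<^sub>R y) + (1/3) *\<^sub>R (2 *\<^sub>R y)"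
    by (simp add: scaleR_add_left[symmetric])
  ultimately have "y \<in> open_segment ((1/2) *\<^sub>R y) (2 *\<^sub>R y)"
    unfolding in_segment(2) by (intro conjI exI[of _ "1/3"]) auto
  moreover have "open_segment ((1/2) *\<^sub>R y) (2 *\<^sub>R y) \<subseteq> interior C"
    by (rule open_segment_subset_interior[OF _ _ distinct])
      (simp_all add: scaleR_mem_closure assms(1))
  ultimately show ?thesis by blast
qed

lemma zero_notin_interior: "0 \<notin> interior C"
proof
  assume 0: "0 \<in> interior C"
  have "v \<in> C" for v
  proof -
    obtain e where "e > 0" "0 + e *\<^sub>R v \<in> interior C"
      using open_contains_positive_step[OF tvs open_interior 0] by blast
    then have "e *\<^sub>R v \<in> C" using interior_subset by auto
    then have "(1/e) *\<^sub>R (e *\<^sub>R v) \<in> C"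
      using cone \<open>e > 0\<close> unfolding pos_cone_def by (meson divide_pos_pos zero_less_one)
    then show ?thesis using \<open>e > 0\<close> by simp
  qed
  then show False using proper by auto
qed

lemma uminus_interior_point_notin_closure:
  assumes "x \<in> interior C"
  shows "- x \<notin> closure C"
proof
  assume "- x \<in> closure C"
  have "x \<noteq> 0" using assms zero_notin_interior by auto
  then have "x \<noteq> - x"
    by (metis add.inverse_neutral add_eq_0_iff2 scaleR_2 scaleR_eq_0_iff zero_neq_numeral)
  have "x \<in> closure C" using assms interior_subset closure_subset by auto
  have "0 \<in> open_segment x (- x)"
    unfolding in_segment using \<open>x \<noteq> - x\<close> by (intro conjI exI[of _ "1/2"]) (auto simp: algebra_simps)
  then have "0 \<in> interior C"
    using open_segment_subset_interior[OF \<open>x \<in> closure C\<close> \<open>- x \<in> closure C\<close> \<open>x \<noteq> - x\<close>]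
    by blast
  then show False using zero_notin_interior by blast
qed

lemma closed_segment_avoiding_zero_stays_in_interior:
  assumes "a \<in> interior C" "0 \<notin> closed_segment a b"
  shows "b \<in> interior C"
proof (rule ccontr)
  assume "b \<notin> interior C"
  moreover have "b \<noteq> 0" using assms(2) by auto
  ultimately have "b \<notin> C"
    using nonzero_closure_point_in_interior closure_subset by blast
  moreover have "a \<in> C" using assms(1) interior_subset by blast
  ultimately obtain z where z: "z \<in> closed_segment a b" "z \<in> frontier C"
    using connected_Int_frontier[OF connected_closed_segment_trvs[OF tvs], of a b C] by auto
  then have "z \<noteq> 0" "z \<in> closure C" "z \<notin> interior C"
    using assms(2) unfolding frontier_def by auto
  then show False using nonzero_closure_point_in_interior by blast
qed

lemma span_interior_point_eq_UNIV:
  assumes "x \<in> interior C"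
  shows "span {x} = UNIV"
proof -
  have "x \<noteq> 0" using assms zero_notin_interior by auto
  have "y \<in> span {x}" for y
  proof (rule ccontr)
    assume off_line: "y \<notin> span {x}"
    then have "y \<in> interior C"
      using closed_segment_avoiding_zero_stays_in_interior[OF assms]
        in_span_if_zero_in_closed_segment \<open>x \<noteq> 0\<close> by blast
    moreover have "0 \<notin> closed_segment y (- x)"
    proof
      assume "0 \<in> closed_segment y (- x)"
      then have "y \<in> span {- x}"
        using in_span_if_zero_in_closed_segment[of "- x" y] \<open>x \<noteq> 0\<close>
        by (simp add: closed_segment_commute)
      also have "span {- x} \<subseteq> span {x}"
        by (metis span_mono span_span span_neg span_base singletonI empty_subsetI insert_subset)
      finally show False using off_line by blast
    qed
    ultimately have "- x \<in> interior C"
      by (rule closed_segment_avoiding_zero_stays_in_interior)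
    then show False
      using uminus_interior_point_notin_closure[OF assms] interior_subset closure_subset by blast
  qed
  then show ?thesis by auto
qed

end

theorem mainTheorem12:
  fixes C :: "'a::{real_vector,topological_space} set"
  assumes "topological_real_vector_space TYPE('a)"
    and "pos_cone C"
    and "strictly_convex_set C"
    and "interior C \<noteq> {}"
    and "C \<noteq> UNIV"
  shows "dim (UNIV :: 'a set) = 1 \<and>
         (\<exists>x::'a. x \<noteq> 0 \<and> C \<union> {0} = {t *\<^sub>R x | t::real. t \<ge> 0})"
proof -
  interpret strictly_convex_solid_cone C using assms by unfold_locales
  obtain x where x: "x \<in> interior C" using assms(4) by auto
  have "x \<noteq> 0" using x zero_notin_interior by auto
  have span: "span {x} = UNIV" using span_interior_point_eq_UNIV[OF x] .
  have "dim (UNIV :: 'a set) = 1"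
    using dim_span[of "{x}"] span \<open>x \<noteq> 0\<close> by (simp add: dim_eq_card_independent)
  moreover have "x \<in> C" "- x \<notin> C"
    using x interior_subset closure_subset uminus_interior_point_notin_closure by blast+
  then have "C \<union> {0} = {t *\<^sub>R x | t. t \<ge> 0}"
    by (rule cone_Un_zero_eq_ray[OF cone _ _ span])
  ultimately show ?thesis using \<open>x \<noteq> 0\<close> by blast
qed

end
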